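(* Fix a monomial order on $S$. Let $J,E$ be ideals of $S$ and let $\mathcal G_J$ be a Gröbner basis of $J$. If $E$ is S-nice with respect to $\mathcal G_J$, then $(J,E)$ is a G-nice pair; more precisely, for every Gröbner basis $\mathcal G_E$ of $E$, $\mathcal G_E\cup\mathcal G_J$ is a Gröbner basis of $J+E$.
   Context: $K$ is a field and $S=K[x_1,\ldots,x_n]$ with a fixed monomial order. For $0\neq f\in S$, $\mathrm{in}(f)$ denotes its leading monomial and $\mathrm{LT}(f)$ its leading term; for an ideal $I$, $\mathrm{in}(I)$ is the ideal generated by the leading monomials of the nonzero elements of $I$. A pair $(J,E)$ of ideals is G-nice if $\mathrm{in}(J+E)=\mathrm{in}(J)+\mathrm{in}(E)$. For nonzero $f,g\in S$ the S-polynomial is $S(f,g)=\frac{\mathrm{lcm}(\mathrm{in}(f),\mathrm{in}(g))}{\mathrm{LT}(f)}f-\frac{\mathrm{lcm}(\mathrm{in}(f),\mathrm{in}(g))}{\mathrm{LT}(g)}g$. Given a Gröbner basis $\mathcal G_J$ of an ideal $J$, an ideal $E$ is called S-nice with respect to $\mathcal G_J$ if $S(f,g)\in E$ for all $f\in\mathcal G_J$ and all nonzero $g\in E$. *)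

theory Defs
  imports "HOL-Library.Poly_Mapping"
begin

text \<open>Polynomial ring S = K[x_v : v in 'v] over a field K, with a finite type 'v of
variables.\<close>

type_synonym ('v, 'a) mpoly = "('v \<Rightarrow>\<^sub>0 nat) \<Rightarrow>\<^sub>0 'a"

definition monomial_order :: "(('v \<Rightarrow>\<^sub>0 nat) \<Rightarrow> ('v \<Rightarrow>\<^sub>0 nat) \<Rightarrow> bool) \<Rightarrow> bool" where
  "monomial_order ord \<longleftrightarrow>
     (\<forall>a. ord a a) \<and>
     (\<forall>a b. ord a b \<and> ord b a \<longrightarrow> a = b) \<and>
     (\<forall>a b c. ord a b \<and> ord b c \<longrightarrow> ord a c) \<and>
     (\<forall>a b. ord a b \<or> ord b a) \<and>
     (\<forall>a. ord 0 a) \<and>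
     (\<forall>a b c. ord a b \<longrightarrow> ord (a + c) (b + c))"

definition lm :: "(('v \<Rightarrow>\<^sub>0 nat) \<Rightarrow> ('v \<Rightarrow>\<^sub>0 nat) \<Rightarrow> bool) \<Rightarrow> ('v, 'a::zero) mpoly \<Rightarrow> ('v \<Rightarrow>\<^sub>0 nat)" where
  "lm ord f = (THE m. m \<in> Poly_Mapping.keys f \<and> (\<forall>m'\<in>Poly_Mapping.keys f. ord m' m))"

definition lc :: "(('v \<Rightarrow>\<^sub>0 nat) \<Rightarrow> ('v \<Rightarrow>\<^sub>0 nat) \<Rightarrow> bool) \<Rightarrow> ('v, 'a::zero) mpoly \<Rightarrow> 'a" where
  "lc ord f = Poly_Mapping.lookup f (lm ord f)"

text \<open>in(f) as an element of S (the monic leading monomial).\<close>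
definition init :: "(('v \<Rightarrow>\<^sub>0 nat) \<Rightarrow> ('v \<Rightarrow>\<^sub>0 nat) \<Rightarrow> bool) \<Rightarrow> ('v, 'a::{zero,one}) mpoly \<Rightarrow> ('v, 'a) mpoly" where
  "init ord f = Poly_Mapping.single (lm ord f) 1"

definition LT :: "(('v \<Rightarrow>\<^sub>0 nat) \<Rightarrow> ('v \<Rightarrow>\<^sub>0 nat) \<Rightarrow> bool) \<Rightarrow> ('v, 'a::zero) mpoly \<Rightarrow> ('v, 'a) mpoly" where
  "LT ord f = Poly_Mapping.single (lm ord f) (lc ord f)"

definition is_ideal :: "'r::comm_ring_1 set \<Rightarrow> bool" where
  "is_ideal I \<longleftrightarrow> 0 \<in> I \<and> (\<forall>x\<in>I. \<forall>y\<in>I. x + y \<in> I) \<and> (\<forall>r. \<forall>x\<in>I. r * x \<in> I)"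

definition ideal_gen :: "'r::comm_ring_1 set \<Rightarrow> 'r set" where
  "ideal_gen G = \<Inter>{I. is_ideal I \<and> G \<subseteq> I}"

definition ideal_sum :: "'r::comm_ring_1 set \<Rightarrow> 'r set \<Rightarrow> 'r set" where
  "ideal_sum I J = {a + b | a b. a \<in> I \<and> b \<in> J}"

definition init_ideal :: "(('v \<Rightarrow>\<^sub>0 nat) \<Rightarrow> ('v \<Rightarrow>\<^sub>0 nat) \<Rightarrow> bool) \<Rightarrow> ('v, 'a::comm_ring_1) mpoly set \<Rightarrow> ('v, 'a) mpoly set" where
  "init_ideal ord I = ideal_gen {init ord f | f. f \<in> I \<and> f \<noteq> 0}"

definition groebner_basis :: "(('v \<Rightarrow>\<^sub>0 nat) \<Rightarrow> ('v \<Rightarrow>\<^sub>0 nat) \<Rightarrow> bool) \<Rightarrow> ('v, 'a::comm_ring_1) mpoly set \<Rightarrow> ('v, 'a) mpoly set \<Rightarrow> bool" where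
  "groebner_basis ord I G \<longleftrightarrow> finite G \<and> G \<subseteq> I - {0} \<and>
     init_ideal ord I = ideal_gen (init ord ` G)"

lift_definition mon_lcm :: "('v \<Rightarrow>\<^sub>0 nat) \<Rightarrow> ('v \<Rightarrow>\<^sub>0 nat) \<Rightarrow> ('v \<Rightarrow>\<^sub>0 nat)"
  is "\<lambda>a b x. max (a x) (b x)"
proof -
  fix a b :: "'v \<Rightarrow> nat"
  assume "finite {x. a x \<noteq> 0}" "finite {x. b x \<noteq> 0}"
  then have "finite ({x. a x \<noteq> 0} \<union> {x. b x \<noteq> 0})" by simp
  moreover have "{x. max (a x) (b x) \<noteq> 0} \<subseteq> {x. a x \<noteq> 0} \<union> {x. b x \<noteq> 0}" by auto
  ultimately show "finite {x. max (a x) (b x) \<noteq> 0}" by (rule finite_subset[rotated])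
qed

definition spoly :: "(('v \<Rightarrow>\<^sub>0 nat) \<Rightarrow> ('v \<Rightarrow>\<^sub>0 nat) \<Rightarrow> bool) \<Rightarrow> ('v, 'a::field) mpoly \<Rightarrow> ('v, 'a) mpoly \<Rightarrow> ('v, 'a) mpoly" where
  "spoly ord f g =
     (let L = mon_lcm (lm ord f) (lm ord g) in
       Poly_Mapping.single (L - lm ord f) (inverse (lc ord f)) * f
       - Poly_Mapping.single (L - lm ord g) (inverse (lc ord g)) * g)"

definition G_nice :: "(('v \<Rightarrow>\<^sub>0 nat) \<Rightarrow> ('v \<Rightarrow>\<^sub>0 nat) \<Rightarrow> bool) \<Rightarrow> ('v, 'a::comm_ring_1) mpoly set \<Rightarrow> ('v, 'a) mpoly set \<Rightarrow> bool" where
  "G_nice ord J E \<longleftrightarrow> init_ideal ord (ideal_sum J E) = ideal_sum (init_ideal ord J) (init_ideal ord E)"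

definition S_nice :: "(('v \<Rightarrow>\<^sub>0 nat) \<Rightarrow> ('v \<Rightarrow>\<^sub>0 nat) \<Rightarrow> bool) \<Rightarrow> ('v, 'a::field) mpoly set \<Rightarrow> ('v, 'a) mpoly set \<Rightarrow> bool" where
  "S_nice ord GJ E \<longleftrightarrow> (\<forall>f\<in>GJ. \<forall>g\<in>E. g \<noteq> 0 \<longrightarrow> spoly ord f g \<in> E)"

end

theory Submission
  imports Defs "HOL.Topological_Spaces"
begin

text \<open>Every nonzero \<open>h = a + b\<close> with \<open>a \<in> J\<close>, \<open>b \<in> E\<close> has the leading
monomial of some nonzero element of \<open>J\<close> or of \<open>E\<close>; this gives
\<open>in(J + E) = in(J) + in(E)\<close>, and the Groebner basis claim follows. We argue by
well-founded induction on \<open>in(a)\<close>. The only problem is cancellation, \<open>in(a) = in(b)\<close>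
with \<open>LT(a) + LT(b) = 0\<close>. Then \<open>in(f)\<close> divides \<open>in(a)\<close> for some \<open>f \<in> G\<^sub>J\<close>,
and as \<open>in(f)\<close> also divides \<open>in(b)\<close>, the S-polynomial \<open>S(f, b)\<close> is a monomial
multiple of \<open>f\<close> minus a scalar multiple of \<open>b\<close>. S-niceness puts it into \<open>E\<close>, so a
monomial multiple \<open>p\<close> of \<open>f\<close> with \<open>LT(p) = LT(a)\<close> lies in \<open>J \<inter> E\<close>. Replacing
\<open>(a, b)\<close> by \<open>(a - p, b + p)\<close> keeps the sum and lowers \<open>in(a)\<close>.\<close>

subsection \<open>Monomial orders\<close>

context
  fixes ord :: "('v \<Rightarrow>\<^sub>0 nat) \<Rightarrow> ('v \<Rightarrow>\<^sub>0 nat) \<Rightarrow> bool"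
  assumes mo: "monomial_order ord"
begin

lemma monomial_order_refl: "ord a a"
  using mo unfolding monomial_order_def by blast

lemma monomial_order_antisym: "ord a b \<Longrightarrow> ord b a \<Longrightarrow> a = b"
  using mo unfolding monomial_order_def by blast

lemma monomial_order_trans: "ord a b \<Longrightarrow> ord b c \<Longrightarrow> ord a c"
  using mo unfolding monomial_order_def by blast

lemma monomial_order_total: "ord a b \<or> ord b a"
  using mo unfolding monomial_order_def by blast

lemma monomial_order_add_right: "ord a b \<Longrightarrow> ord (a + c) (b + c)"
  using mo unfolding monomial_order_def by blast

lemma monomial_order_le_add: "ord a (a + d)"
proof -
  have "ord 0 d"
    using mo unfolding monomial_order_def by blast
  then show ?thesis
    using monomial_order_add_right[of 0 d a] by (simp add: add.commute)
qed

lemma finite_has_ord_greatest: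
  assumes "finite K" "K \<noteq> {}"
  shows "\<exists>m\<in>K. \<forall>k\<in>K. ord k m"
  using assms
proof (induction K rule: finite_ne_induct)
  case (singleton x)
  then show ?case using monomial_order_refl by auto
next
  case (insert x F)
  then obtain m where "m \<in> F" "\<forall>k\<in>F. ord k m" by auto
  then show ?case
    using monomial_order_total[of x m] monomial_order_refl monomial_order_trans by blast
qed

lemma lm_eqI:
  assumes "m \<in> Poly_Mapping.keys f" "\<And>k. k \<in> Poly_Mapping.keys f \<Longrightarrow> ord k m"
  shows "lm ord f = m"
  unfolding lm_def
proof (rule the_equality)
  show "m \<in> Poly_Mapping.keys f \<and> (\<forall>k\<in>Poly_Mapping.keys f. ord k m)"
    using assms by blast
next
  fix m' assume "m' \<in> Poly_Mapping.keys f \<and> (\<forall>k\<in>Poly_Mapping.keys f. ord k m')"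
  then show "m' = m"
    using assms monomial_order_antisym by blast
qed

lemma lm_greatest_key:
  assumes "f \<noteq> 0"
  shows "lm ord f \<in> Poly_Mapping.keys f \<and> (\<forall>k\<in>Poly_Mapping.keys f. ord k (lm ord f))"
proof -
  obtain m where "m \<in> Poly_Mapping.keys f" "\<forall>k\<in>Poly_Mapping.keys f. ord k m"
    using finite_has_ord_greatest[of "Poly_Mapping.keys f"] assms by auto
  then show ?thesis
    using lm_eqI by auto
qed

lemma lm_in_keys: "f \<noteq> 0 \<Longrightarrow> lm ord f \<in> Poly_Mapping.keys f"
  using lm_greatest_key by blast

lemma ord_lm: "k \<in> Poly_Mapping.keys f \<Longrightarrow> ord k (lm ord f)"
  using lm_greatest_key[of f] by (cases "f = 0") auto

lemma lc_nonzero: "f \<noteq> 0 \<Longrightarrow> lc ord f \<noteq> 0"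
  using lm_in_keys unfolding lc_def by (simp add: in_keys_iff)

lemma lm_add_cases:
  fixes a b :: "('v, 'a::comm_monoid_add) mpoly"
  assumes "a \<noteq> 0" "b \<noteq> 0"
  shows "lm ord (a + b) = lm ord a \<or> lm ord (a + b) = lm ord b \<or>
    lm ord a = lm ord b \<and> Poly_Mapping.lookup (a + b) (lm ord a) = 0"
proof -
  have dominant: "lm ord (a + b) = lm ord a \<or>
      lm ord a = lm ord b \<and> Poly_Mapping.lookup (a + b) (lm ord a) = 0"
    if "a \<noteq> 0" "b \<noteq> 0" "ord (lm ord b) (lm ord a)" for a b :: "('v, 'a) mpoly"
  proof (cases "Poly_Mapping.lookup (a + b) (lm ord a) = 0")
    case False
    have "ord k (lm ord a)" if "k \<in> Poly_Mapping.keys (a + b)" for k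
      using that keys_add[of a b] ord_lm[of k a] ord_lm[of k b] \<open>ord (lm ord b) (lm ord a)\<close>
        monomial_order_trans by blast
    with False have "lm ord (a + b) = lm ord a"
      by (intro lm_eqI) (simp_all add: in_keys_iff)
    then show ?thesis ..
  next
    case True
    with lm_in_keys[OF \<open>a \<noteq> 0\<close>] have "lm ord a \<in> Poly_Mapping.keys b"
      by (metis add.right_neutral in_keys_iff lookup_add)
    then show ?thesis
      using True ord_lm \<open>ord (lm ord b) (lm ord a)\<close> monomial_order_antisym by blast
  qed
  show ?thesis
    using monomial_order_total[of "lm ord a" "lm ord b"]
      dominant[OF assms] dominant[OF assms(2,1)] by (auto simp: add.commute)
qed

end

subsection \<open>Well-foundedness: Dickson's lemma\<close>

lemma nat_seq_has_mono_subseq: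
  fixes x :: "nat \<Rightarrow> nat"
  shows "\<exists>s :: nat \<Rightarrow> nat. strict_mono s \<and> mono (\<lambda>i. x (s i))"
proof -
  obtain s :: "nat \<Rightarrow> nat" where s: "strict_mono s" "monoseq (\<lambda>i. x (s i))"
    using seq_monosub by blast
  show ?thesis
  proof (cases "mono (\<lambda>i. x (s i))")
    case False
    then have decreasing: "\<And>m n. m \<le> n \<Longrightarrow> x (s n) \<le> x (s m)"
      using s(2) unfolding monoseq_def mono_def by auto
    obtain N where N: "\<And>n. x (s N) \<le> x (s n)"
      using ex_has_least_nat[of "\<lambda>_. True" 0 "\<lambda>i. x (s i)"] by auto
    \<comment> \<open>a non-increasing sequence of naturals is constant from its minimum on\<close>
    have "strict_mono (\<lambda>i. s (i + N))"
      using s(1) by (simp add: strict_mono_def)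
    moreover have "mono (\<lambda>i. x (s (i + N)))"
      using decreasing N by (intro monoI) (meson le_add2 order_trans)
    ultimately show ?thesis
      by blast
  qed (use s in blast)
qed

lemma dickson_subseq:
  fixes x :: "nat \<Rightarrow> 'v \<Rightarrow> nat"
  assumes "finite V"
  shows "\<exists>s :: nat \<Rightarrow> nat. strict_mono s \<and> (\<forall>v\<in>V. mono (\<lambda>i. x (s i) v))"
  using assms
proof (induction V rule: finite_induct)
  case empty
  show ?case
    by (intro exI[of _ id]) (simp add: strict_mono_def)
next
  case (insert w V)
  then obtain s :: "nat \<Rightarrow> nat" where s: "strict_mono s" "\<forall>v\<in>V. mono (\<lambda>i. x (s i) v)"
    by blast
  obtain t :: "nat \<Rightarrow> nat" where t: "strict_mono t" "mono (\<lambda>i. x (s (t i)) w)"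
    using nat_seq_has_mono_subseq[of "\<lambda>i. x (s i) w"] by blast
  have "mono (\<lambda>i. x (s (t i)) v)" if "v \<in> V" for v
  proof (rule monoI)
    fix i j :: nat
    assume "i \<le> j"
    then have "t i \<le> t j"
      using strict_mono_less_eq[OF t(1)] by simp
    then show "x (s (t i)) v \<le> x (s (t j)) v"
      using s(2) that monoD[of "\<lambda>i. x (s i) v"] by blast
  qed
  then show ?case
    using strict_mono_o[OF s(1) t(1)] t(2) by (auto simp: comp_def)
qed

lemma monomial_order_wf:
  fixes ord :: "('v::finite \<Rightarrow>\<^sub>0 nat) \<Rightarrow> ('v \<Rightarrow>\<^sub>0 nat) \<Rightarrow> bool"
  assumes mo: "monomial_order ord"
  shows "wf {(a, b). ord a b \<and> a \<noteq> b}" (is "wf ?less")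
  unfolding wf_iff_no_infinite_down_chain
proof
  assume "\<exists>f. \<forall>i. (f (Suc i), f i) \<in> ?less"
  then obtain f where f: "\<And>i. (f (Suc i), f i) \<in> ?less"
    by blast
  have "trans ?less"
    using monomial_order_trans[OF mo] monomial_order_antisym[OF mo] by (auto intro: transI)
  have descending: "(f j, f i) \<in> ?less" if "i < j" for i j
    using that
  proof (induction j)
    case (Suc j)
    then consider "i = j" | "i < j"
      by linarith
    then show ?case
      using f[of j] Suc.IH transD[OF \<open>trans ?less\<close>] by cases blast+
  qed simp
  obtain s :: "nat \<Rightarrow> nat"
    where s: "strict_mono s" "\<And>v. mono (\<lambda>i. Poly_Mapping.lookup (f (s i)) v)"
    using dickson_subseq[of UNIV "\<lambda>i. Poly_Mapping.lookup (f i)"] by auto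
  define d where "d = f (s 1) - f (s 0)"
  have "Poly_Mapping.lookup (f (s 0)) v \<le> Poly_Mapping.lookup (f (s 1)) v" for v
    using monoD[OF s(2), of 0 1] by simp
  then have "f (s 1) = f (s 0) + d"
    unfolding d_def by (intro poly_mapping_eqI) (simp add: lookup_add lookup_minus)
  then have "ord (f (s 0)) (f (s 1))"
    using monomial_order_le_add[OF mo] by simp
  moreover have "(f (s 1), f (s 0)) \<in> ?less"
    using descending strict_monoD[OF s(1), of 0 1] by simp
  ultimately show False
    using monomial_order_antisym[OF mo] by blast
qed

lemma is_idealD:
  assumes "is_ideal I"
  shows ideal_zero: "0 \<in> I"
    and ideal_add: "x \<in> I \<Longrightarrow> y \<in> I \<Longrightarrow> x + y \<in> I"
    and ideal_mult: "x \<in> I \<Longrightarrow> r * x \<in> I"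
  using assms unfolding is_ideal_def by blast+

lemma ideal_diff:
  assumes "is_ideal I" "x \<in> I" "y \<in> I"
  shows "x - y \<in> I"
  using ideal_add[OF assms(1,2) ideal_mult[OF assms(1,3), of "- 1"]] by simp

lemma is_ideal_ideal_gen: "is_ideal (ideal_gen G)"
  unfolding ideal_gen_def is_ideal_def by auto

lemma ideal_gen_subset: "G \<subseteq> ideal_gen G"
  unfolding ideal_gen_def by auto

lemma ideal_gen_least: "is_ideal I \<Longrightarrow> G \<subseteq> I \<Longrightarrow> ideal_gen G \<subseteq> I"
  unfolding ideal_gen_def by auto

lemma ideal_gen_mono: "A \<subseteq> B \<Longrightarrow> ideal_gen A \<subseteq> ideal_gen B"
  unfolding ideal_gen_def by auto

lemma is_ideal_ideal_sum:
  assumes I: "is_ideal I" and J: "is_ideal J"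
  shows "is_ideal (ideal_sum I J)"
  unfolding is_ideal_def ideal_sum_def
proof (intro conjI ballI allI)
  have "0 + 0 \<in> {a + b |a b. a \<in> I \<and> b \<in> J}"
    using ideal_zero[OF I] ideal_zero[OF J] by blast
  then show "0 \<in> {a + b |a b. a \<in> I \<and> b \<in> J}"
    by simp
next
  fix x y assume "x \<in> {a + b |a b. a \<in> I \<and> b \<in> J}" "y \<in> {a + b |a b. a \<in> I \<and> b \<in> J}"
  then obtain a b a' b' where "x = a + b" "y = a' + b'" "a \<in> I" "b \<in> J" "a' \<in> I" "b' \<in> J"
    by blast
  moreover have "x + y = (a + a') + (b + b')"
    using calculation by (simp add: algebra_simps)
  ultimately show "x + y \<in> {a + b |a b. a \<in> I \<and> b \<in> J}"
    using ideal_add[OF I] ideal_add[OF J] by blast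
next
  fix r x assume "x \<in> {a + b |a b. a \<in> I \<and> b \<in> J}"
  then obtain a b where "x = a + b" "a \<in> I" "b \<in> J"
    by blast
  moreover have "r * x = r * a + r * b"
    using calculation by (simp add: algebra_simps)
  ultimately show "r * x \<in> {a + b |a b. a \<in> I \<and> b \<in> J}"
    using ideal_mult[OF I] ideal_mult[OF J] by blast
qed

lemma ideal_sum_upper1: "is_ideal J \<Longrightarrow> I \<subseteq> ideal_sum I J"
  unfolding ideal_sum_def using ideal_zero by force

lemma ideal_sum_upper2: "is_ideal I \<Longrightarrow> J \<subseteq> ideal_sum I J"
  unfolding ideal_sum_def using ideal_zero by force

lemma ideal_sum_ideal_gen: "ideal_sum (ideal_gen A) (ideal_gen B) = ideal_gen (A \<union> B)"
proof
  have "ideal_gen A \<subseteq> ideal_gen (A \<union> B)" "ideal_gen B \<subseteq> ideal_gen (A \<union> B)"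
    by (simp_all add: ideal_gen_mono)
  then show "ideal_sum (ideal_gen A) (ideal_gen B) \<subseteq> ideal_gen (A \<union> B)"
    unfolding ideal_sum_def using ideal_add[OF is_ideal_ideal_gen] by blast
next
  have "A \<subseteq> ideal_sum (ideal_gen A) (ideal_gen B)"
    using ideal_gen_subset[of A] ideal_sum_upper1[OF is_ideal_ideal_gen]
    by (rule order_trans)
  moreover have "B \<subseteq> ideal_sum (ideal_gen A) (ideal_gen B)"
    using ideal_gen_subset[of B] ideal_sum_upper2[OF is_ideal_ideal_gen]
    by (rule order_trans)
  ultimately show "ideal_gen (A \<union> B) \<subseteq> ideal_sum (ideal_gen A) (ideal_gen B)"
    by (simp add: ideal_gen_least is_ideal_ideal_sum is_ideal_ideal_gen)
qed

subsection \<open>Initial ideals and S-polynomials\<close>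

lemma init_ideal_eq: "init_ideal ord I = ideal_gen (init ord ` (I - {0}))"
  unfolding init_ideal_def by (rule arg_cong[where f = ideal_gen]) blast

lemma init_eq_iff_lm_eq:
  "init ord f = (init ord g :: ('v, 'a::zero_neq_one) mpoly) \<longleftrightarrow> lm ord f = lm ord g"
  unfolding init_def by (metis lookup_single_eq lookup_single_not_eq zero_neq_one)

lemma keys_ideal_gen_init:
  fixes G :: "('v, 'a::comm_ring_1) mpoly set"
  assumes "p \<in> ideal_gen (init ord ` G)" "k \<in> Poly_Mapping.keys p"
  shows "\<exists>g\<in>G. \<exists>d. k = lm ord g + d"
proof -
  define D where
    "D = {p :: ('v, 'a) mpoly. \<forall>k\<in>Poly_Mapping.keys p. \<exists>g\<in>G. \<exists>d. k = lm ord g + d}"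
  have "is_ideal D"
    unfolding is_ideal_def
  proof (intro conjI ballI allI)
    show "0 \<in> D"
      unfolding D_def by simp
  next
    fix x y assume "x \<in> D" "y \<in> D"
    then show "x + y \<in> D"
      using keys_add[of x y] unfolding D_def by blast
  next
    fix r x assume x: "x \<in> D"
    show "r * x \<in> D"
      unfolding D_def
    proof (intro CollectI ballI)
      fix k assume "k \<in> Poly_Mapping.keys (r * x)"
      then obtain u v where "k = u + v" "v \<in> Poly_Mapping.keys x"
        using keys_mult by blast
      moreover obtain g d where "g \<in> G" "v = lm ord g + d"
        using x calculation(2) unfolding D_def by blast
      ultimately have "k = lm ord g + (u + d)"
        by (simp add: add_ac)
      with \<open>g \<in> G\<close> show "\<exists>g\<in>G. \<exists>d. k = lm ord g + d"
        by blast
    qed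
  qed
  moreover have "init ord ` G \<subseteq> D"
    unfolding D_def init_def by auto (metis add.right_neutral)
  ultimately have "ideal_gen (init ord ` G) \<subseteq> D"
    by (rule ideal_gen_least)
  with assms show ?thesis
    unfolding D_def by blast
qed

lemma groebner_basis_lm_dvd:
  assumes "groebner_basis ord I G" "f \<in> I" "f \<noteq> 0"
  shows "\<exists>g\<in>G. \<exists>d. lm ord f = lm ord g + d"
proof -
  have "init ord f \<in> init_ideal ord I"
    unfolding init_ideal_eq using assms(2,3) by (intro subsetD[OF ideal_gen_subset]) blast
  then have "init ord f \<in> ideal_gen (init ord ` G)"
    using assms(1) unfolding groebner_basis_def by simp
  then show ?thesis
    by (rule keys_ideal_gen_init) (simp add: init_def)
qed

lemma mon_lcm_add_right: "mon_lcm a (a + d) = a + d"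
  by (rule poly_mapping_eqI) (simp add: mon_lcm.rep_eq lookup_add)

lemma spoly_lm_dvd:
  assumes "lm ord g = lm ord f + d"
  shows "spoly ord f g =
    Poly_Mapping.single d (inverse (lc ord f)) * f - Poly_Mapping.single 0 (inverse (lc ord g)) * g"
  using assms by (simp add: spoly_def mon_lcm_add_right)

lemma lookup_single_mult_shift:
  fixes f :: "('v, 'a::comm_semiring_1) mpoly"
  shows "Poly_Mapping.lookup (Poly_Mapping.single u c * f) (u + k) = c * Poly_Mapping.lookup f k"
proof -
  have "Poly_Mapping.lookup (Poly_Mapping.single u c * f) (u + k)
      = (\<Sum>l. (c when u = l) * (\<Sum>q. Poly_Mapping.lookup f q when u + k = l + q))"
    by (simp add: lookup_mult lookup_single)
  also have "\<dots> = c * (\<Sum>q. Poly_Mapping.lookup f q when u + k = u + q)"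
    by (simp add: when_mult)
  also have "(\<Sum>q. Poly_Mapping.lookup f q when u + k = u + q) = Poly_Mapping.lookup f k"
    by (simp add: eq_commute[of k])
  finally show ?thesis .
qed

lemma keys_single_mult:
  "Poly_Mapping.keys (Poly_Mapping.single u c * f) \<subseteq> (+) u ` Poly_Mapping.keys f"
  using keys_mult[of "Poly_Mapping.single u c" f] by (auto split: if_splits)

lemma ord_keys_single_mult:
  assumes mo: "monomial_order ord"
    and k: "k \<in> Poly_Mapping.keys (Poly_Mapping.single d c * f)"
  shows "ord k (d + lm ord f)"
proof -
  obtain k' where "k' \<in> Poly_Mapping.keys f" "k = d + k'"
    using k keys_single_mult by blast
  then show ?thesis
    using monomial_order_add_right[OF mo ord_lm[OF mo], of k' f d] by (simp add: add.commute)
qed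

subsection \<open>The descent\<close>

lemma S_nice_cancellation:
  fixes J E GJ :: "('v, 'a::field) mpoly set"
  assumes mo: "monomial_order ord" and J: "is_ideal J" and E: "is_ideal E"
    and GB: "groebner_basis ord J GJ" and SN: "S_nice ord GJ E"
    and a: "a \<in> J" "a \<noteq> 0" and b: "b \<in> E" "b \<noteq> 0" and lm_eq: "lm ord b = lm ord a"
  shows "\<exists>p \<in> J \<inter> E. Poly_Mapping.lookup p (lm ord a) = lc ord a \<and>
    (\<forall>k\<in>Poly_Mapping.keys p. ord k (lm ord a))"
proof -
  obtain f d where f: "f \<in> GJ" and d: "lm ord a = d + lm ord f"
    using groebner_basis_lm_dvd[OF GB a] by (auto simp: add.commute)
  have "f \<in> J" "f \<noteq> 0"
    using f GB unfolding groebner_basis_def by auto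
  define q where "q = Poly_Mapping.single d (inverse (lc ord f)) * f"
  have "spoly ord f b = q - Poly_Mapping.single 0 (inverse (lc ord b)) * b"
    unfolding q_def using lm_eq d by (intro spoly_lm_dvd) (simp add: add.commute)
  moreover have "spoly ord f b \<in> E"
    using SN f b unfolding S_nice_def by blast
  then have "spoly ord f b + Poly_Mapping.single 0 (inverse (lc ord b)) * b \<in> E"
    by (intro ideal_add[OF E] ideal_mult[OF E b(1)])
  ultimately have "q \<in> E"
    by simp
  define p where "p = Poly_Mapping.single d (lc ord a * inverse (lc ord f)) * f"
  have "p \<in> J"
    unfolding p_def by (rule ideal_mult[OF J \<open>f \<in> J\<close>])
  moreover have "p = Poly_Mapping.single 0 (lc ord a) * q"
    unfolding p_def q_def by (simp add: mult.assoc[symmetric] mult_single)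
  then have "p \<in> E"
    using ideal_mult[OF E \<open>q \<in> E\<close>] by simp
  ultimately have "p \<in> J \<inter> E"
    by blast
  moreover have "Poly_Mapping.lookup p (lm ord a) = lc ord a"
    unfolding p_def d lookup_single_mult_shift lc_def[of ord f, symmetric]
    using lc_nonzero[OF mo \<open>f \<noteq> 0\<close>] by simp
  moreover have "\<forall>k\<in>Poly_Mapping.keys p. ord k (lm ord a)"
    unfolding p_def d using ord_keys_single_mult[OF mo] by blast
  ultimately show ?thesis
    by blast
qed

lemma ideal_sum_lm_attained:
  fixes J E GJ :: "('v::finite, 'a::field) mpoly set"
  assumes mo: "monomial_order ord" and J: "is_ideal J" and E: "is_ideal E"
    and GB: "groebner_basis ord J GJ" and SN: "S_nice ord GJ E"
    and "a \<in> J" "b \<in> E" "a + b \<noteq> 0"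
  shows "\<exists>x \<in> (J \<union> E) - {0}. lm ord x = lm ord (a + b)"
  using monomial_order_wf[OF mo] assms(6-8)
proof (induction "lm ord a" arbitrary: a b rule: wf_induct_rule)
  case less
  show ?case
  proof (cases "a = 0 \<or> b = 0")
    case True
    with less.prems show ?thesis
      by auto
  next
    case False
    then consider "lm ord (a + b) = lm ord a" | "lm ord (a + b) = lm ord b"
      | "lm ord b = lm ord a" "Poly_Mapping.lookup (a + b) (lm ord a) = 0"
      using lm_add_cases[OF mo] by metis
    then show ?thesis
    proof cases
      case 3
      obtain p where p: "p \<in> J \<inter> E" "Poly_Mapping.lookup p (lm ord a) = lc ord a"
        "\<forall>k\<in>Poly_Mapping.keys p. ord k (lm ord a)"
        using S_nice_cancellation[OF mo J E GB SN] less.prems False 3(1) by blast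
      have a': "a - p \<in> J" and b': "b + p \<in> E" and sum: "(a - p) + (b + p) = a + b"
        using ideal_diff[OF J] ideal_add[OF E] less.prems p(1) by auto
      show ?thesis
      proof (cases "a - p = 0")
        case True
        with sum have "b + p = a + b"
          by simp
        with b' less.prems(3) have "a + b \<in> (J \<union> E) - {0}"
          by simp
        then show ?thesis
          by blast
      next
        case False
        have "Poly_Mapping.lookup (a - p) (lm ord a) = 0"
          using p(2) by (simp add: lookup_minus lc_def)
        then have "lm ord (a - p) \<noteq> lm ord a"
          using lm_in_keys[OF mo False] by (auto simp: in_keys_iff)
        moreover have "ord (lm ord (a - p)) (lm ord a)"
          using lm_in_keys[OF mo False] keys_add[of a "- p"] p(3) ord_lm[OF mo, of _ a] by auto
        ultimately show ?thesis
          using less.hyps[of "a - p" "b + p"] a' b' sum less.prems(3) by auto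
      qed
    qed (use less.prems False in auto)
  qed
qed

lemma S_nice_imp_G_nice:
  fixes J E GJ :: "('v::finite, 'a::field) mpoly set"
  assumes mo: "monomial_order ord" and J: "is_ideal J" and E: "is_ideal E"
    and GB: "groebner_basis ord J GJ" and SN: "S_nice ord GJ E"
  shows "G_nice ord J E"
proof -
  have "init ord ` (ideal_sum J E - {0}) = init ord ` ((J \<union> E) - {0})"
  proof
    show "init ord ` (ideal_sum J E - {0}) \<subseteq> init ord ` ((J \<union> E) - {0})"
    proof
      fix h assume "h \<in> init ord ` (ideal_sum J E - {0})"
      then obtain a b where "h = init ord (a + b)" "a \<in> J" "b \<in> E" "a + b \<noteq> 0"
        unfolding ideal_sum_def by blast
      with ideal_sum_lm_attained[OF assms] obtain x where "x \<in> (J \<union> E) - {0}" "init ord x = h"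
        by (metis init_eq_iff_lm_eq)
      then show "h \<in> init ord ` ((J \<union> E) - {0})"
        by blast
    qed
    show "init ord ` ((J \<union> E) - {0}) \<subseteq> init ord ` (ideal_sum J E - {0})"
      using ideal_sum_upper1[OF E] ideal_sum_upper2[OF J] by blast
  qed
  then show ?thesis
    unfolding G_nice_def init_ideal_eq by (simp add: Un_Diff image_Un ideal_sum_ideal_gen)
qed

lemma groebner_basis_ideal_sum:
  assumes J: "is_ideal J" and E: "is_ideal E" and "G_nice ord J E"
    and GJ: "groebner_basis ord J GJ" and GE: "groebner_basis ord E GE"
  shows "groebner_basis ord (ideal_sum J E) (GE \<union> GJ)"
  unfolding groebner_basis_def
proof (intro conjI)
  show "finite (GE \<union> GJ)"
    using GJ GE unfolding groebner_basis_def by blast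
  show "GE \<union> GJ \<subseteq> ideal_sum J E - {0}"
    using GJ GE ideal_sum_upper1[OF E] ideal_sum_upper2[OF J] unfolding groebner_basis_def by blast
  show "init_ideal ord (ideal_sum J E) = ideal_gen (init ord ` (GE \<union> GJ))"
    using \<open>G_nice ord J E\<close> GJ GE unfolding G_nice_def groebner_basis_def
    by (simp add: ideal_sum_ideal_gen image_Un Un_commute)
qed

theorem mainTheorem14:
  fixes ord :: "('v::finite \<Rightarrow>\<^sub>0 nat) \<Rightarrow> ('v \<Rightarrow>\<^sub>0 nat) \<Rightarrow> bool"
    and J E GJ :: "('v, 'a::field) mpoly set"
  assumes "monomial_order ord"
    and "is_ideal J" and "is_ideal E"
    and "groebner_basis ord J GJ"
    and "S_nice ord GJ E"
  shows "G_nice ord J E \<and>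
    (\<forall>GE. groebner_basis ord E GE \<longrightarrow> groebner_basis ord (ideal_sum J E) (GE \<union> GJ))"
proof -
  have "G_nice ord J E"
    using assms by (rule S_nice_imp_G_nice)
  then show ?thesis
    using groebner_basis_ideal_sum[OF assms(2,3) _ assms(4)] by blast
qed

end
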